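(* Let $d\in\mathbb N$ and $\delta\in(0,1]$. For all Borel measurable functions $v,w\colon(0,1)^d\to\mathbb R$ and all $r\in(0,\delta)$, $$\|v\cdot w\|_{W^{r,2}((0,1)^d,\mathbb R)}\le\frac{(3d)^{d/2}}{\sqrt{\delta-r}}\,\|v\|_{W^{r,2}((0,1)^d,\mathbb R)}\,\|w\|_{C^\delta((0,1)^d,\mathbb R)},$$ where $v\cdot w$ denotes the pointwise product (with the convention $0\cdot\infty=0$ being irrelevant when both norms are finite).
   Context: For a function $w\colon(0,1)^d\to\mathbb R$ and $\delta\in(0,1]$: $\|w\|_{C((0,1)^d,\mathbb R)}:=\sup_{x\in(0,1)^d}|w(x)|$ and $\|w\|_{C^\delta((0,1)^d,\mathbb R)}:=\sup_{x}|w(x)|+\sup_{x\ne y}\frac{|w(x)-w(y)|}{\|x-y\|^\delta_{\mathbb R^d}}\in[0,\infty]$. For Borel measurable $v\colon(0,1)^d\to\mathbb R$ and $r\in(0,1)$: $\|v\|_{W^{r,2}((0,1)^d,\mathbb R)}:=\Big(\int_{(0,1)^d}|v(x)|^2dx+\int_{(0,1)^d}\int_{(0,1)^d}\frac{|v(x)-v(y)|^2}{\|x-y\|_{\mathbb R^d}^{d+2r}}dx\,dy\Big)^{1/2}\in[0,\infty]$. $\|\cdot\|_{\mathbb R^d}$ is the Euclidean norm. *)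

theory Defs
  imports "HOL-Analysis.Analysis"
begin

text \<open>The unit cube (0,1)^d, with d = CARD('n).\<close>
definition unit_cube :: "(real ^ 'n) set" where
  "unit_cube = {x. \<forall>i. 0 < x $ i \<and> x $ i < 1}"

definition ens_sqrt :: "ennreal \<Rightarrow> ennreal" where
  "ens_sqrt a = (if a = \<infinity> then \<infinity> else ennreal (sqrt (enn2real a)))"

definition sup_norm :: "(real ^ 'n \<Rightarrow> real) \<Rightarrow> ennreal" where
  "sup_norm w = (SUP x \<in> unit_cube. ennreal \<bar>w x\<bar>)"

definition hoelder_norm :: "real \<Rightarrow> (real ^ 'n \<Rightarrow> real) \<Rightarrow> ennreal" where
  "hoelder_norm \<delta> w = (SUP x \<in> unit_cube. ennreal \<bar>w x\<bar>)
     + (SUP p \<in> {(x, y). x \<in> unit_cube \<and> y \<in> unit_cube \<and> x \<noteq> y}.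
          ennreal (\<bar>w (fst p) - w (snd p)\<bar> / (norm (fst p - snd p) powr \<delta>)))"

definition sobolev_norm :: "real \<Rightarrow> (real ^ 'n \<Rightarrow> real) \<Rightarrow> ennreal" where
  "sobolev_norm r v = ens_sqrt
     ((\<integral>\<^sup>+ x. indicator unit_cube x * ennreal (\<bar>v x\<bar>\<^sup>2) \<partial>lborel)
      + (\<integral>\<^sup>+ x. \<integral>\<^sup>+ y. indicator unit_cube x * indicator unit_cube y *
            ennreal (\<bar>v x - v y\<bar>\<^sup>2 / (norm (x - y) powr (real CARD('n) + 2 * r))) \<partial>lborel \<partial>lborel))"

end

theory Submission
  imports Defs
begin

(*
  Write S = sup |w| and H = Hoelder seminorm of w on U.  The L2 part of v w is bounded by
  S^2 times the L2 part of v.  For the Gagliardo part we use, for x, y in U,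
     |v(x)w(x) - v(y)w(y)|^2 <= 2 S^2 |v(x) - v(y)|^2 + 2 H^2 |x - y|^{2 delta} |v(x)|^2,
  so the Gagliardo part of v w (kernel |x - y|^{-(d + 2r)}) is at most 2 S^2 times that of v
  plus 2 H^2 K times the L2 part of v, where K bounds the weakly singular kernel integral
     int_U |x - y|^{-(d - 2s)} dy <= (3d)^d / (2s)      (x in U).
  The kernel bound is proved by splitting U into dyadic shells around x (sup-norm cubes of
  side 2^{1-k} minus those of side 2^{-k}) and summing a geometric series.  Squaring the
  claimed inequality, everything then reduces to elementary algebra in [0,\<infinity>].
  Finally, the theorem (for functions measurable on U only) follows from the version for
  Borel functions on all of R^d by extending v and w by zero outside U.
*)

text \<open>\<open>ens_sqrt\<close> is a genuine square root on \<open>[0,\<infinity>]\<close>; together with monotonicity this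
  lets us prove the norm inequality by comparing squares.\<close>
lemma ens_sqrt_square: "(ens_sqrt a)^2 = a"
proof (cases "a = \<infinity>")
  case True
  then show ?thesis by (simp add: ens_sqrt_def)
next
  case False
  then obtain t where t: "a = ennreal t" "0 \<le> t" by (cases a) auto
  then have "(ennreal (sqrt t))^2 = ennreal ((sqrt t)^2)" by (simp add: ennreal_power)
  then show ?thesis using t False by (simp add: ens_sqrt_def)
qed

lemma ens_sqrt_le:
  assumes "a \<le> b^2"
  shows "ens_sqrt a \<le> b"
proof (cases "b = \<infinity>")
  case True
  then show ?thesis by simp
next
  case False
  then obtain t where t: "b = ennreal t" "0 \<le> t" by (cases b) auto
  then have "a \<le> ennreal (t^2)" using assms by (simp add: ennreal_power)
  then obtain u where u: "a = ennreal u" "0 \<le> u" "u \<le> t^2"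
    by (metis le_ennreal_iff zero_le_power2)
  have "sqrt u \<le> t" using u t real_sqrt_le_iff[of u "t^2"] by simp
  then show ?thesis using u t by (simp add: ens_sqrt_def)
qed

lemma unit_cube_eq_box: "(unit_cube :: (real^'n) set) = box 0 (vec 1)"
  by (auto simp: unit_cube_def mem_box_cart)

lemma unit_cube_borel [measurable]: "(unit_cube :: (real^'n) set) \<in> sets borel"
  by (simp add: unit_cube_eq_box)

text \<open>The cube has volume 1; it bounds the kernel integral in dimension one.\<close>
lemma emeasure_unit_cube: "emeasure lborel (unit_cube :: (real^'n) set) = 1"
proof -
  have "prod ((\<bullet>) (\<chi> i. (1::real))) (\<Union>i. {axis i 1 :: real^'n}) = 1"
    by (intro prod.neutral) (auto simp: inner_axis)
  then show ?thesis
    by (simp add: unit_cube_eq_box emeasure_lborel_box_eq Basis_vec_def inner_axis one_vec_def)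
qed

lemma unit_cube_coordinate_dist:
  assumes "x \<in> unit_cube" "y \<in> unit_cube"
  shows "\<bar>y $ i - x $ i\<bar> \<le> 1"
proof -
  have "0 < x $ i" "x $ i < 1" "0 < y $ i" "y $ i < 1" using assms unfolding unit_cube_def by auto
  then show ?thesis by linarith
qed

definition l2_part :: "(real ^ 'n \<Rightarrow> real) \<Rightarrow> ennreal" where
  "l2_part v = (\<integral>\<^sup>+ x. indicator unit_cube x * ennreal (\<bar>v x\<bar>\<^sup>2) \<partial>lborel)"

definition gagliardo_part :: "real \<Rightarrow> (real ^ 'n \<Rightarrow> real) \<Rightarrow> ennreal" where
  "gagliardo_part p v = (\<integral>\<^sup>+ x. \<integral>\<^sup>+ y. indicator unit_cube x * indicator unit_cube y *
       ennreal (\<bar>v x - v y\<bar>\<^sup>2 / (norm (x - y) powr p)) \<partial>lborel \<partial>lborel)"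

definition hoelder_seminorm :: "real \<Rightarrow> (real ^ 'n \<Rightarrow> real) \<Rightarrow> ennreal" where
  "hoelder_seminorm \<delta> w = (SUP p \<in> {(x, y). x \<in> unit_cube \<and> y \<in> unit_cube \<and> x \<noteq> y}.
       ennreal (\<bar>w (fst p) - w (snd p)\<bar> / (norm (fst p - snd p) powr \<delta>)))"

lemma sobolev_norm_split:
  fixes v :: "real ^ 'n \<Rightarrow> real"
  shows "sobolev_norm r v = ens_sqrt (l2_part v + gagliardo_part (real CARD('n) + 2 * r) v)"
  by (simp add: sobolev_norm_def l2_part_def gagliardo_part_def)

lemma hoelder_norm_split: "hoelder_norm \<delta> w = sup_norm w + hoelder_seminorm \<delta> w"
  by (simp add: hoelder_norm_def sup_norm_def hoelder_seminorm_def)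

lemma sup_norm_upper: "x \<in> unit_cube \<Longrightarrow> ennreal \<bar>w x\<bar> \<le> sup_norm w"
  unfolding sup_norm_def by (rule SUP_upper)

lemma hoelder_seminorm_upper:
  "x \<in> unit_cube \<Longrightarrow> y \<in> unit_cube \<Longrightarrow> x \<noteq> y \<Longrightarrow>
     ennreal (\<bar>w x - w y\<bar> / norm (x - y) powr \<delta>) \<le> hoelder_seminorm \<delta> w"
  unfolding hoelder_seminorm_def by (intro SUP_upper2[of "(x, y)"]) auto

lemma sobolev_norm_cong:
  fixes v v' :: "real ^ 'n \<Rightarrow> real"
  assumes "\<And>x. x \<in> unit_cube \<Longrightarrow> v x = v' x"
  shows "sobolev_norm r v = sobolev_norm r v'"
proof -
  have "indicator unit_cube x * ennreal (\<bar>v x\<bar>\<^sup>2) = indicator unit_cube x * ennreal (\<bar>v' x\<bar>\<^sup>2)"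
    for x :: "real^'n"
    using assms by (cases "x \<in> unit_cube") auto
  moreover have "indicator unit_cube x * indicator unit_cube y * ennreal (\<bar>v x - v y\<bar>\<^sup>2 / q)
      = indicator unit_cube x * indicator unit_cube y * ennreal (\<bar>v' x - v' y\<bar>\<^sup>2 / q)"
    for x y :: "real^'n" and q
    using assms by (cases "x \<in> unit_cube \<and> y \<in> unit_cube") auto
  ultimately show ?thesis unfolding sobolev_norm_def by presburger
qed

lemma hoelder_norm_cong:
  assumes "\<And>x. x \<in> unit_cube \<Longrightarrow> w x = w' x"
  shows "hoelder_norm \<delta> w = hoelder_norm \<delta> w'"
  unfolding hoelder_norm_def by (intro arg_cong2[where f="(+)"] SUP_cong) (auto simp: assms)

section \<open>Elementary estimates for the kernel constant\<close>

text \<open>A crude lower bound for \<open>ln 2\<close>, from \<open>e^2 < 8\<close>.\<close>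
lemma two_thirds_le_ln2: "2/3 \<le> ln (2::real)"
proof -
  have "exp (2::real) = exp 1 ^ 2" using exp_of_nat_mult[of 2 "1::real"] by simp
  also have "\<dots> < (272/100)^2" using e_less_272 by (intro power_strict_mono) auto
  also have "\<dots> < 8" by (simp add: power2_eq_square)
  finally have "exp (2::real) < 8" .
  moreover have "exp (2::real) = exp (2/3) ^ 3" using exp_of_nat_mult[of 3 "2/3::real"] by simp
  ultimately have "exp (2/3::real) ^ 3 < 2^3" by simp
  then have "exp (2/3::real) < 2" using power_less_imp_less_base by fastforce
  then show ?thesis by (metis ln_exp ln_less_cancel_iff exp_gt_zero zero_less_numeral less_imp_le)
qed

text \<open>The dimension-dependent inequality \<open>3 \<cdot> 2^d (2^d - 1) \<le> 2 (3d)^d\<close> behind the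
  constant \<open>(3d)^d\<close>; for \<open>d \<ge> 2\<close> it follows from \<open>3 \<cdot> 4^d \<le> 2 \<cdot> 6^d\<close>.\<close>
lemma dimension_constant_ineq:
  assumes "1 \<le> m"
  shows "3 * 2^m * (2^m - 1) \<le> 2 * (3 * real m)^m"
proof (cases "m = 1")
  case True
  then show ?thesis by simp
next
  case False
  with assms have m2: "2 \<le> m" by simp
  have four_six: "3 * (4::real)^n \<le> 2 * 6^n" if "1 \<le> n" for n :: nat
    using that by (induction n rule: dec_induct) simp_all
  have "3 * 2^m * (2^m - 1) \<le> 3 * (2::real)^m * 2^m" by simp
  also have "\<dots> = 3 * 4^m" by (simp add: power_mult_distrib[symmetric])
  also have "\<dots> \<le> 2 * 6^m" using four_six assms by simp
  also have "\<dots> \<le> 2 * (3 * real m)^m" using m2 by (intro mult_left_mono power_mono) auto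
  finally show ?thesis .
qed

text \<open>The geometric series produced by the dyadic decomposition is bounded by the
  paper's constant \<open>(3d)^d / (2s)\<close>; this uses \<open>2^{2s} - 1 \<ge> 2s ln 2 \<ge> 4s/3\<close>.\<close>
lemma dyadic_series_bound:
  assumes s: "0 < s" and m: "1 \<le> m"
  shows "2 powr (real m - 2 * s) * (2^m - 1) / (1 - 2 powr (-2 * s)) \<le> (3 * real m)^m / (2 * s)"
proof -
  define u where "u = (2::real) powr (2 * s)"
  have "u = exp (2 * s * ln 2)" by (simp add: u_def powr_def)
  also have "\<dots> \<ge> 1 + 2 * s * ln 2" by (rule exp_ge_add_one_self)
  finally have "u - 1 \<ge> 2 * s * ln 2" by simp
  moreover have "2 * s * ln 2 \<ge> 2 * s * (2/3)" using two_thirds_le_ln2 s by (intro mult_left_mono) auto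
  ultimately have u1: "u - 1 \<ge> 4 * s / 3" by simp
  have "2 powr (real m - 2 * s) * (2^m - 1) / (1 - 2 powr (-2 * s)) = 2^m * (2^m - 1) / (u - 1)"
    using u1 s by (simp add: u_def powr_diff powr_minus powr_realpow field_simps)
  also have "\<dots> \<le> 2^m * (2^m - 1) / (4 * s / 3)"
    using u1 s by (intro divide_left_mono mult_nonneg_nonneg) (auto simp: one_le_power)
  also have "\<dots> = (3 * 2^m * (2^m - 1)) / 2 / (2 * s)" using s by (simp add: field_simps)
  also have "\<dots> \<le> (2 * (3 * real m)^m) / 2 / (2 * s)"
    using dimension_constant_ineq[OF m] s by (intro divide_right_mono) auto
  finally show ?thesis by simp
qed

section \<open>Dyadic shells and the weakly singular kernel\<close>

text \<open>\<open>dyadic_cube x k\<close> is the closed sup-norm ball of radius \<open>2^{-k}\<close> around \<open>x\<close>;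
  consecutive cubes bound the shells on which \<open>|x - y|\<close> is comparable to \<open>2^{-k}\<close>.\<close>
definition dyadic_cube :: "real^'n \<Rightarrow> nat \<Rightarrow> (real^'n) set" where
  "dyadic_cube x k = cbox (x - vec ((1/2)^k)) (x + vec ((1/2)^k))"

definition dyadic_shell :: "real^'n \<Rightarrow> nat \<Rightarrow> (real^'n) set" where
  "dyadic_shell x k = dyadic_cube x k - dyadic_cube x (Suc k)"

lemma mem_dyadic_cube: "y \<in> dyadic_cube x k \<longleftrightarrow> (\<forall>i. \<bar>y $ i - x $ i\<bar> \<le> (1/2)^k)"
  by (auto simp: dyadic_cube_def mem_box_cart abs_le_iff algebra_simps)

lemma dyadic_cube_borel [measurable]: "dyadic_cube x k \<in> sets borel"
  by (simp add: dyadic_cube_def)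

lemma dyadic_shell_borel [measurable]: "dyadic_shell x k \<in> sets borel"
  unfolding dyadic_shell_def by (intro sets.Diff dyadic_cube_borel)

lemma emeasure_dyadic_cube:
  "emeasure lborel (dyadic_cube x k :: (real^'n) set) = ennreal ((2 * (1/2)^k)^CARD('n))"
proof -
  have ne: "dyadic_cube x k \<noteq> {}" using mem_dyadic_cube[of x x k] by auto
  have "emeasure lborel (dyadic_cube x k) = ennreal (measure lborel (dyadic_cube x k))"
    using emeasure_lborel_cbox_finite[of "x - vec ((1/2)^k)" "x + vec ((1/2)^k)"]
    by (intro emeasure_eq_ennreal_measure) (simp add: dyadic_cube_def)
  also have "measure lborel (dyadic_cube x k) = (2 * (1/2)^k)^CARD('n)"
    using ne by (simp add: dyadic_cube_def content_cbox_cart)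
  finally show ?thesis .
qed

lemma emeasure_dyadic_shell:
  "emeasure lborel (dyadic_shell x k :: (real^'n) set)
     = ennreal ((2 * (1/2)^k)^CARD('n) - (2 * (1/2)^Suc k)^CARD('n))"
proof -
  have "(1/2::real)^Suc k \<le> (1/2)^k" by (rule power_decreasing) auto
  then have "dyadic_cube x (Suc k) \<subseteq> dyadic_cube x k"
    by (meson mem_dyadic_cube order_trans subsetI)
  then have "emeasure lborel (dyadic_shell x k)
      = emeasure lborel (dyadic_cube x k) - emeasure lborel (dyadic_cube x (Suc k))"
    unfolding dyadic_shell_def by (intro emeasure_Diff) (auto simp: emeasure_dyadic_cube)
  then show ?thesis by (simp add: emeasure_dyadic_cube ennreal_minus)
qed

text \<open>Every point of the cube other than \<open>x\<close> lies in some shell around \<open>x\<close>: it lies in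
  the cube of radius 1, but not in the cubes of small radius.\<close>
lemma dyadic_shell_exists:
  assumes "x \<in> unit_cube" "y \<in> unit_cube" "y \<noteq> x"
  shows "\<exists>k. y \<in> dyadic_shell x k"
proof (rule ccontr)
  assume no_shell: "\<not> ?thesis"
  obtain i where "y $ i \<noteq> x $ i" using assms(3) by (auto simp: vec_eq_iff)
  then obtain K where K: "(1/2::real)^K < \<bar>y $ i - x $ i\<bar>"
    using real_arch_pow_inv[of "\<bar>y $ i - x $ i\<bar>" "1/2"] by auto
  have "y \<in> dyadic_cube x 0"
    using unit_cube_coordinate_dist[OF assms(1,2)] by (simp add: mem_dyadic_cube)
  then have "y \<in> dyadic_cube x k" for k
    using no_shell by (induction k) (auto simp: dyadic_shell_def)
  with K show False by (meson mem_dyadic_cube not_le)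
qed

text \<open>On the \<open>k\<close>-th shell, \<open>|x - y| > 2^{-(k+1)}\<close>, hence for \<open>a \<ge> 0\<close> the kernel
  \<open>|x - y|^{-a}\<close> is at most \<open>2^{(k+1) a}\<close>.\<close>
lemma kernel_on_dyadic_shell:
  assumes "y \<in> dyadic_shell x k" and "0 \<le> a"
  shows "1 / norm (x - y) powr a \<le> 2 powr (real (Suc k) * a)"
proof -
  define t where "t = (1/2::real)^Suc k"
  have t: "0 < t" by (simp add: t_def)
  obtain j where "\<bar>y $ j - x $ j\<bar> > t"
    using assms(1) unfolding dyadic_shell_def Diff_iff mem_dyadic_cube t_def by (meson not_le)
  also have "\<bar>y $ j - x $ j\<bar> \<le> norm (x - y)"
    using component_le_norm_cart[of "x - y" j] by simp
  finally have "t < norm (x - y)" .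
  then have "1 / norm (x - y) powr a \<le> 1 / t powr a"
    using t assms(2) by (intro divide_left_mono powr_mono2 mult_pos_pos) auto
  also have "\<dots> = (1 / t) powr a" using t by (simp add: powr_divide)
  also have "1 / t = 2 ^ Suc k" by (simp add: t_def power_one_over)
  also have "(2::real) ^ Suc k = 2 powr real (Suc k)" by (rule powr_realpow[symmetric]) simp
  finally show ?thesis by (simp add: powr_powr)
qed

lemma dyadic_term_eq:
  assumes "a = real m - 2 * s"
  shows "2 powr (real (Suc k) * a) * ((2 * (1/2)^k)^m - (2 * (1/2)^(Suc k))^m)
       = 2 powr a * (2^m - 1) * (2 powr (-2 * s))^k"
proof -
  have pow: "((2::real) powr e)^n = 2 powr (e * real n)" for e n
    by (simp add: powr_realpow[symmetric] powr_powr)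
  have outer: "(2 * (1/2::real)^k)^m = 2 powr (- real k * m) * 2 powr m"
  proof -
    have "2 * (1/2::real)^k = 2 powr (1 - real k)"
      by (simp add: powr_diff powr_realpow power_one_over)
    then have "(2 * (1/2::real)^k)^m = 2 powr (- real k * m + m)"
      by (simp add: pow left_diff_distrib)
    then show ?thesis by (simp only: powr_add)
  qed
  have inner: "(2 * (1/2::real)^Suc k)^m = 2 powr (- real k * m)"
  proof -
    have "2 * (1/2::real)^Suc k = 1 / 2 ^ k" by (simp add: power_one_over)
    also have "\<dots> = 2 powr (- real k)" by (simp add: powr_minus_divide powr_realpow)
    finally show ?thesis by (simp add: pow)
  qed
  have exponents: "(2::real) powr (real (Suc k) * a) * 2 powr (- real k * m) = 2 powr a * 2 powr (-2 * s * k)"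
  proof -
    have "real (Suc k) * a + (- real k * m) = a + (-2 * s * k)" unfolding assms by (simp add: algebra_simps)
    then show ?thesis by (metis powr_add)
  qed
  have "2 powr (real (Suc k) * a) * ((2 * (1/2)^k)^m - (2 * (1/2)^(Suc k))^m)
      = 2 powr (real (Suc k) * a) * 2 powr (- real k * m) * (2 powr m - 1)"
    unfolding outer inner by (simp add: right_diff_distrib mult.assoc)
  also have "\<dots> = 2 powr a * (2^m - 1) * (2 powr (-2 * s))^k"
    unfolding exponents pow by (simp add: powr_realpow)
  finally show ?thesis .
qed

text \<open>The kernel bound for a non-negative exponent \<open>a = d - 2s\<close>: dominate the kernel by a
  step function constant on the dyadic shells and integrate term by term.\<close>
lemma kernel_integral_bound_nonneg:
  fixes x :: "real^'n"
  assumes x: "x \<in> unit_cube" and s: "0 < s" and a: "a = real CARD('n) - 2 * s" and a0: "0 \<le> a"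
  shows "(\<integral>\<^sup>+ y. indicator unit_cube y * ennreal (1 / norm (x - y) powr a) \<partial>lborel)
         \<le> ennreal ((3 * real CARD('n))^CARD('n) / (2 * s))"
proof -
  define c where "c k = (2::real) powr (real (Suc k) * a)" for k
  define q where "q = (2::real) powr (-2 * s)"
  have q: "0 < q" "q < 1" using s by (auto simp: q_def powr_less_one)
  have dominated: "indicator unit_cube y * ennreal (1 / norm (x - y) powr a)
      \<le> (\<Sum>k. ennreal (c k) * indicator (dyadic_shell x k) y)" for y
  proof (cases "y \<in> unit_cube \<and> y \<noteq> x")
    case True
    then obtain k where k: "y \<in> dyadic_shell x k" using dyadic_shell_exists[OF x] by blast
    then have "indicator unit_cube y * ennreal (1 / norm (x - y) powr a)
        \<le> ennreal (c k) * indicator (dyadic_shell x k) y"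
      using True kernel_on_dyadic_shell[OF k a0] by (simp add: c_def ennreal_leI)
    also have "\<dots> \<le> (\<Sum>k. ennreal (c k) * indicator (dyadic_shell x k) y)"
      using sum_le_suminf[OF summableI, of "{k}"] by simp
    finally show ?thesis .
  qed auto
  have shell_integral: "(\<integral>\<^sup>+ y. ennreal (c k) * indicator (dyadic_shell x k) y \<partial>lborel)
      = ennreal (2 powr a * (2^CARD('n) - 1) * q^k)" for k
  proof -
    have "0 \<le> (2 * (1/2::real)^k)^CARD('n) - (2 * (1/2)^Suc k)^CARD('n)"
      by (auto intro!: power_mono)
    then have "(\<integral>\<^sup>+ y. ennreal (c k) * indicator (dyadic_shell x k) y \<partial>lborel)
        = ennreal (c k * ((2 * (1/2)^k)^CARD('n) - (2 * (1/2)^Suc k)^CARD('n)))"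
      by (simp add: nn_integral_cmult_indicator emeasure_dyadic_shell ennreal_mult c_def)
    then show ?thesis unfolding c_def q_def dyadic_term_eq[OF a] .
  qed
  have "(\<integral>\<^sup>+ y. indicator unit_cube y * ennreal (1 / norm (x - y) powr a) \<partial>lborel)
        \<le> (\<integral>\<^sup>+ y. (\<Sum>k. ennreal (c k) * indicator (dyadic_shell x k) y) \<partial>lborel)"
    by (intro nn_integral_mono dominated)
  also have "\<dots> = (\<Sum>k. \<integral>\<^sup>+ y. ennreal (c k) * indicator (dyadic_shell x k) y \<partial>lborel)"
    by (intro nn_integral_suminf) measurable
  also have "\<dots> = ennreal (2 powr a * (2^CARD('n) - 1) * (1 / (1 - q)))"
    unfolding shell_integral using q by (intro suminf_ennreal_eq sums_mult geometric_sums) auto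
  also have "\<dots> \<le> ennreal ((3 * real CARD('n))^CARD('n) / (2 * s))"
    using dyadic_series_bound[OF s, of "CARD('n)"] unfolding a q_def by (intro ennreal_leI) simp
  finally show ?thesis .
qed

text \<open>A negative exponent \<open>a = d - 2s\<close> with \<open>s < 1\<close> forces \<open>d = 1\<close>; then \<open>|x - y| \<le> 1\<close>
  on the cube, so the kernel is at most 1 and its integral at most the volume 1.\<close>
lemma kernel_integral_bound_neg:
  fixes x :: "real^'n"
  assumes x: "x \<in> unit_cube" and s: "0 < s" "s < 1" and a: "a = real CARD('n) - 2 * s" and "a < 0"
  shows "(\<integral>\<^sup>+ y. indicator unit_cube y * ennreal (1 / norm (x - y) powr a) \<partial>lborel)
         \<le> ennreal ((3 * real CARD('n))^CARD('n) / (2 * s))"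
proof -
  have "real CARD('n) < 2" "0 < CARD('n)" using \<open>a < 0\<close> a s by simp_all
  then have "CARD('n) = 1" by linarith
  then obtain i :: 'n where univ: "UNIV = {i}" using card_1_singletonE by blast
  have kernel_le_1: "indicator unit_cube y * ennreal (1 / norm (x - y) powr a) \<le> indicator unit_cube y"
    for y
  proof (cases "y \<in> unit_cube \<and> x \<noteq> y")
    case True
    have "norm (x - y) \<le> (\<Sum>j\<in>UNIV. \<bar>(x - y) $ j\<bar>)" by (rule norm_le_l1_cart)
    also have "\<dots> = \<bar>y $ i - x $ i\<bar>" by (simp add: univ abs_minus_commute)
    also have "\<dots> \<le> 1" using True unit_cube_coordinate_dist[OF x] by blast
    finally have "norm (x - y) \<le> 1" .
    then have "norm (x - y) powr (-a) \<le> 1 powr (-a)"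
      using True \<open>a < 0\<close> by (intro powr_mono2) auto
    then have "1 / norm (x - y) powr a \<le> 1" using True by (simp add: powr_minus divide_inverse)
    then show ?thesis using True by simp
  qed auto
  have "(\<integral>\<^sup>+ y. indicator unit_cube y * ennreal (1 / norm (x - y) powr a) \<partial>lborel)
        \<le> (\<integral>\<^sup>+ y. indicator (unit_cube :: (real^'n) set) y \<partial>lborel)"
    by (intro nn_integral_mono kernel_le_1)
  also have "\<dots> = 1" using emeasure_unit_cube by simp
  also have "\<dots> \<le> ennreal ((3 * real CARD('n))^CARD('n) / (2 * s))"
    using \<open>CARD('n) = 1\<close> s by simp
  finally show ?thesis .
qed

lemma kernel_integral_bound:
  fixes x :: "real^'n"
  assumes "x \<in> unit_cube" and "0 < s" "s < 1"
  shows "(\<integral>\<^sup>+ y. indicator unit_cube y * ennreal (1 / norm (x - y) powr (real CARD('n) - 2 * s)) \<partial>lborel)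
         \<le> ennreal ((3 * real CARD('n))^CARD('n) / (2 * s))"
  using kernel_integral_bound_nonneg[OF assms(1,2) refl] kernel_integral_bound_neg[OF assms refl]
  by (cases "real CARD('n) - 2 * s < 0") auto

section \<open>The pointwise product estimate\<close>

text \<open>Splitting \<open>v(x)w(x) - v(y)w(y) = (v(x) - v(y)) w(y) + v(x) (w(x) - w(y))\<close> and dividing by
  \<open>n^p\<close>, the second term carries the Hoelder quotient times the milder kernel \<open>n^{-(p - 2 dl)}\<close>.\<close>
lemma product_difference_bound:
  fixes vx vy wx wy n p dl :: real
  assumes n: "0 < n"
  shows "\<bar>vx * wx - vy * wy\<bar>\<^sup>2 / n powr p
     \<le> 2 * \<bar>wy\<bar>^2 * (\<bar>vx - vy\<bar>\<^sup>2 / n powr p)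
       + 2 * (\<bar>wx - wy\<bar> / n powr dl)^2 * \<bar>vx\<bar>\<^sup>2 * (1 / n powr (p - 2 * dl))"
proof -
  have np: "0 < n powr p" "0 < n powr dl" using n by auto
  have "\<bar>vx * wx - vy * wy\<bar>\<^sup>2 = ((vx - vy) * wy + vx * (wx - wy))^2" by (simp add: algebra_simps)
  also have "\<dots> \<le> 2 * ((vx - vy) * wy)^2 + 2 * (vx * (wx - wy))^2"
    by (smt (verit) zero_le_power2 power2_diff power2_sum)
  finally have ineq: "\<bar>vx * wx - vy * wy\<bar>\<^sup>2 \<le> 2 * ((vx - vy) * wy)^2 + 2 * (vx * (wx - wy))^2" .
  have milder_kernel: "1 / n powr (p - 2 * dl) = (n powr dl)^2 / n powr p"
    using n by (simp add: powr_diff powr_mult_base power2_eq_square powr_add[symmetric])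
  have "2 * \<bar>wy\<bar>^2 * (\<bar>vx - vy\<bar>\<^sup>2 / n powr p)
       + 2 * (\<bar>wx - wy\<bar> / n powr dl)^2 * \<bar>vx\<bar>\<^sup>2 * (1 / n powr (p - 2 * dl))
      = (2 * ((vx - vy) * wy)^2 + 2 * (vx * (wx - wy))^2) / n powr p"
    unfolding milder_kernel using np by (simp add: field_simps power2_eq_square)
  then show ?thesis using ineq np by (simp add: divide_right_mono)
qed

lemma product_difference_bound_cube:
  fixes v w :: "real^'n \<Rightarrow> real"
  assumes xy: "x \<in> unit_cube" "y \<in> unit_cube"
  shows "ennreal (\<bar>v x * w x - v y * w y\<bar>\<^sup>2 / norm (x - y) powr p)
     \<le> 2 * (sup_norm w)^2 * ennreal (\<bar>v x - v y\<bar>\<^sup>2 / norm (x - y) powr p)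
       + 2 * (hoelder_seminorm \<delta> w)^2 * ennreal (\<bar>v x\<bar>\<^sup>2) * ennreal (1 / norm (x - y) powr (p - 2 * \<delta>))"
proof (cases "x = y")
  case False
  define n where "n = norm (x - y)"
  define F where "F = \<bar>v x - v y\<bar>\<^sup>2 / n powr p"
  define G where "G = 1 / n powr (p - 2 * \<delta>)"
  define \<beta> where "\<beta> = \<bar>w x - w y\<bar> / n powr \<delta>"
  have n: "0 < n" using False by (simp add: n_def)
  have nonneg: "0 \<le> F" "0 \<le> G" "0 \<le> \<beta>" by (auto simp: F_def G_def \<beta>_def)
  have "ennreal (\<bar>v x * w x - v y * w y\<bar>\<^sup>2 / n powr p) \<le> ennreal (2 * \<bar>w y\<bar>^2 * F + 2 * \<beta>^2 * \<bar>v x\<bar>\<^sup>2 * G)"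
    using product_difference_bound[OF n, of "v x" "w x" "v y" "w y" p \<delta>]
    unfolding F_def G_def \<beta>_def by (rule ennreal_leI)
  also have "\<dots> = 2 * (ennreal \<bar>w y\<bar>)^2 * ennreal F + 2 * (ennreal \<beta>)^2 * ennreal (\<bar>v x\<bar>\<^sup>2) * ennreal G"
    using nonneg by (simp add: ennreal_plus ennreal_mult ennreal_power)
  also have "\<dots> \<le> 2 * (sup_norm w)^2 * ennreal F
      + 2 * (hoelder_seminorm \<delta> w)^2 * ennreal (\<bar>v x\<bar>\<^sup>2) * ennreal G"
    using sup_norm_upper[OF xy(2), of w] hoelder_seminorm_upper[OF xy False, of w \<delta>]
    by (intro add_mono mult_right_mono mult_left_mono power_mono) (auto simp: \<beta>_def n_def)
  finally show ?thesis by (simp add: F_def G_def n_def)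
qed simp

lemma l2_part_product:
  fixes v w :: "real^'n \<Rightarrow> real"
  assumes [measurable]: "v \<in> borel_measurable borel"
  shows "l2_part (\<lambda>x. v x * w x) \<le> (sup_norm w)^2 * l2_part v"
proof -
  have "indicator unit_cube x * ennreal (\<bar>v x * w x\<bar>\<^sup>2)
      \<le> (sup_norm w)^2 * (indicator unit_cube x * ennreal (\<bar>v x\<bar>\<^sup>2))" for x
  proof (cases "x \<in> unit_cube")
    case True
    have "ennreal (\<bar>v x * w x\<bar>\<^sup>2) = (ennreal \<bar>w x\<bar>)^2 * ennreal (\<bar>v x\<bar>\<^sup>2)"
      by (simp add: abs_mult power_mult_distrib ennreal_mult ennreal_power mult.commute)
    also have "\<dots> \<le> (sup_norm w)^2 * ennreal (\<bar>v x\<bar>\<^sup>2)"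
      using sup_norm_upper[OF True] by (intro mult_right_mono power_mono) auto
    finally show ?thesis using True by simp
  qed simp
  then have "l2_part (\<lambda>x. v x * w x)
      \<le> (\<integral>\<^sup>+ x. (sup_norm w)^2 * (indicator unit_cube x * ennreal (\<bar>v x\<bar>\<^sup>2)) \<partial>lborel)"
    unfolding l2_part_def by (intro nn_integral_mono)
  also have "\<dots> = (sup_norm w)^2 * l2_part v"
    unfolding l2_part_def by (rule nn_integral_cmult) measurable
  finally show ?thesis .
qed

text \<open>Integrating the pointwise estimate first in \<open>y\<close> (using the kernel bound, with
  \<open>p - 2 dl = d - 2s\<close>) and then in \<open>x\<close>.\<close>
lemma gagliardo_part_product:
  fixes v w :: "real^'n \<Rightarrow> real"
  assumes [measurable]: "v \<in> borel_measurable borel" "w \<in> borel_measurable borel"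
    and s: "0 < s" "s < 1" and p: "p = real CARD('n) + 2 * r" and dl: "dl = r + s"
  defines "K \<equiv> ennreal ((3 * real CARD('n))^CARD('n) / (2 * s))"
  shows "gagliardo_part p (\<lambda>x. v x * w x)
     \<le> 2 * (sup_norm w)^2 * gagliardo_part p v + 2 * (hoelder_seminorm dl w)^2 * K * l2_part v"
proof -
  define S where "S = 2 * (sup_norm w)^2"
  define H where "H = 2 * (hoelder_seminorm dl w)^2"
  define \<Phi> where "\<Phi> x = (\<integral>\<^sup>+ y. indicator unit_cube x * indicator unit_cube y *
       ennreal (\<bar>v x - v y\<bar>\<^sup>2 / (norm (x - y) powr p)) \<partial>lborel)" for x
  define V where "V x = indicator unit_cube x * ennreal (\<bar>v x\<bar>\<^sup>2)" for x :: "real^'n"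
  define k where "k x y = indicator unit_cube y * ennreal (1 / norm (x - y) powr (p - 2 * dl))"
    for x y :: "real^'n"
  have pd: "p - 2 * dl = real CARD('n) - 2 * s" by (simp add: p dl)
  have inner: "(\<integral>\<^sup>+ y. indicator unit_cube x * indicator unit_cube y *
       ennreal (\<bar>v x * w x - v y * w y\<bar>\<^sup>2 / (norm (x - y) powr p)) \<partial>lborel)
     \<le> S * \<Phi> x + H * K * V x" for x
  proof -
    have "(\<integral>\<^sup>+ y. indicator unit_cube x * indicator unit_cube y *
         ennreal (\<bar>v x * w x - v y * w y\<bar>\<^sup>2 / (norm (x - y) powr p)) \<partial>lborel)
       \<le> (\<integral>\<^sup>+ y. S * (indicator unit_cube x * indicator unit_cube y *
              ennreal (\<bar>v x - v y\<bar>\<^sup>2 / (norm (x - y) powr p))) + (H * V x) * k x y \<partial>lborel)"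
      using product_difference_bound_cube[of x y v w p dl for y]
      by (intro nn_integral_mono)
         (auto simp: S_def H_def V_def k_def indicator_def mult.assoc)
    also have "\<dots> = S * \<Phi> x + (H * V x) * (\<integral>\<^sup>+ y. k x y \<partial>lborel)"
      unfolding \<Phi>_def k_def by (subst nn_integral_add) (auto simp: nn_integral_cmult)
    also have "\<dots> \<le> S * \<Phi> x + H * K * V x"
    proof (cases "x \<in> unit_cube")
      case True
      then have "(\<integral>\<^sup>+ y. k x y \<partial>lborel) \<le> K"
        unfolding k_def K_def pd using s by (rule kernel_integral_bound)
      then have "(H * V x) * (\<integral>\<^sup>+ y. k x y \<partial>lborel) \<le> (H * V x) * K"
        by (rule mult_left_mono) simp
      also have "\<dots> = H * K * V x" by (simp only: mult_ac)
      finally show ?thesis by (rule add_left_mono)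
    qed (simp add: V_def)
    finally show ?thesis .
  qed
  have "gagliardo_part p (\<lambda>x. v x * w x) \<le> (\<integral>\<^sup>+ x. S * \<Phi> x + H * K * V x \<partial>lborel)"
    unfolding gagliardo_part_def by (intro nn_integral_mono inner)
  also have "\<dots> = S * gagliardo_part p v + H * K * l2_part v"
    unfolding gagliardo_part_def l2_part_def \<Phi>_def V_def
    by (subst nn_integral_add) (auto simp: nn_integral_cmult)
  finally show ?thesis unfolding S_def H_def .
qed

lemma combine_bounds:
  fixes S H A B A' B' K Q :: ennreal
  assumes "A' \<le> S^2 * A" "B' \<le> 2 * S^2 * B + 2 * H^2 * K * A" "Q = 2 * K" "2 \<le> Q"
  shows "A' + B' \<le> Q * (S + H)^2 * (A + B)"
proof -
  have Q1: "1 \<le> Q" using assms(4) by (metis dual_order.trans one_le_numeral)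
  have "A' + B' \<le> S^2 * A + (2 * S^2 * B + 2 * H^2 * K * A)" using assms(1,2) by (rule add_mono)
  also have "\<dots> \<le> Q * S^2 * A + (Q * S^2 * B + Q * H^2 * A)"
  proof (intro add_mono)
    show "S^2 * A \<le> Q * S^2 * A" using mult_right_mono[OF Q1, of "S^2 * A"] by (simp add: mult.assoc)
    show "2 * S^2 * B \<le> Q * S^2 * B" using assms(4) by (intro mult_right_mono) auto
    show "2 * H^2 * K * A \<le> Q * H^2 * A" unfolding assms(3) by (simp add: mult_ac)
  qed
  also have "\<dots> = Q * (S^2 * A + S^2 * B + H^2 * A)" by (simp add: algebra_simps)
  also have "\<dots> \<le> Q * ((S + H)^2 * (A + B))"
  proof (rule mult_left_mono)
    have "(S + H)^2 * (A + B) = (S^2 * A + S^2 * B + H^2 * A) + (H^2 * B + 2 * S * H * (A + B))"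
      by (simp only: power2_eq_square distrib_left distrib_right mult_2 mult_2_right mult_ac add_ac)
    then show "S^2 * A + S^2 * B + H^2 * A \<le> (S + H)^2 * (A + B)" by simp
  qed simp
  finally show ?thesis by (simp add: mult.assoc)
qed

lemma product_constant_square:
  assumes s: "0 < s" "s < 1"
  defines "C \<equiv> (3 * real CARD('n::finite)) powr (real CARD('n) / 2) / sqrt s"
  shows "(ennreal C)^2 = 2 * ennreal ((3 * real CARD('n))^CARD('n) / (2 * s))"
    and "2 \<le> (ennreal C)^2"
proof -
  have d1: "1 \<le> real CARD('n)" by simp
  have C0: "0 \<le> C" unfolding C_def using s by simp
  have "((3 * real CARD('n)) powr (real CARD('n) / 2))^2 = (3 * real CARD('n)) powr real CARD('n)"
    by (simp add: power2_eq_square powr_add[symmetric])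
  then have C2: "C^2 = (3 * real CARD('n))^CARD('n) / s"
    unfolding C_def using s by (simp add: power_divide powr_realpow)
  then have "(ennreal C)^2 = ennreal (2 * ((3 * real CARD('n))^CARD('n) / (2 * s)))"
    using C0 s by (simp add: ennreal_power)
  also have "\<dots> = ennreal 2 * ennreal ((3 * real CARD('n))^CARD('n) / (2 * s))"
    using s by (intro ennreal_mult) auto
  finally show "(ennreal C)^2 = 2 * ennreal ((3 * real CARD('n))^CARD('n) / (2 * s))"
    by simp
  have "3 * real CARD('n) \<le> (3 * real CARD('n))^CARD('n)"
    using power_increasing[of 1 "CARD('n)" "3 * real CARD('n)"] d1 by simp
  also have "\<dots> \<le> (3 * real CARD('n))^CARD('n) / s"
    using s by (simp add: le_divide_eq)
  finally have "2 \<le> C^2" unfolding C2 using d1 by linarith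
  then show "2 \<le> (ennreal C)^2" using C0 ennreal_leI[of 2 "C^2"] by (simp add: ennreal_power)
qed

lemma product_estimate_borel:
  fixes v w :: "real ^ 'n \<Rightarrow> real" and \<delta> r :: real
  assumes "v \<in> borel_measurable borel" "w \<in> borel_measurable borel"
    and "\<delta> \<le> 1" "0 < r" "r < \<delta>"
  shows "sobolev_norm r (\<lambda>x. v x * w x)
     \<le> ennreal ((3 * real CARD('n)) powr (real CARD('n) / 2) / sqrt (\<delta> - r))
        * sobolev_norm r v * hoelder_norm \<delta> w"
proof -
  define s where "s = \<delta> - r"
  define C where "C = (3 * real CARD('n)) powr (real CARD('n) / 2) / sqrt s"
  define K where "K = ennreal ((3 * real CARD('n))^CARD('n) / (2 * s))"
  define p where "p = real CARD('n) + 2 * r"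
  have s: "0 < s" "s < 1" using assms by (auto simp: s_def)
  have "l2_part (\<lambda>x. v x * w x) + gagliardo_part p (\<lambda>x. v x * w x)
      \<le> (ennreal C)^2 * (sup_norm w + hoelder_seminorm \<delta> w)^2 * (l2_part v + gagliardo_part p v)"
    using l2_part_product[OF assms(1)]
      gagliardo_part_product[OF assms(1,2) s p_def, of \<delta>]
      product_constant_square[OF s]
    by (intro combine_bounds[where K = K]) (simp_all add: s_def K_def C_def)
  also have "\<dots> = (ennreal C * ens_sqrt (l2_part v + gagliardo_part p v)
      * (sup_norm w + hoelder_seminorm \<delta> w))^2"
    by (simp add: power_mult_distrib ens_sqrt_square mult_ac)
  finally show ?thesis
    unfolding sobolev_norm_split hoelder_norm_split p_def[symmetric] C_def s_def
    by (rule ens_sqrt_le)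
qed

theorem mainTheorem3:
  fixes v w :: "real ^ 'n \<Rightarrow> real" and \<delta> r :: real
  assumes "0 < \<delta>" and "\<delta> \<le> 1"
    and "v \<in> borel_measurable (restrict_space borel unit_cube)"
    and "w \<in> borel_measurable (restrict_space borel unit_cube)"
    and "0 < r" and "r < \<delta>"
  shows "sobolev_norm r (\<lambda>x. v x * w x)
     \<le> ennreal ((3 * real CARD('n)) powr (real CARD('n) / 2) / sqrt (\<delta> - r))
        * sobolev_norm r v * hoelder_norm \<delta> w"
proof -
  \<comment> \<open>Extend \<open>v\<close> and \<open>w\<close> by zero outside the cube; this gives Borel functions on \<open>R^d\<close>
      with the same norms.\<close>
  define v' where "v' x = indicator unit_cube x *\<^sub>R v x" for x :: "real^'n"
  define w' where "w' x = indicator unit_cube x *\<^sub>R w x" for x :: "real^'n"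
  have "v' \<in> borel_measurable borel" "w' \<in> borel_measurable borel"
    using assms(3,4) unfolding v'_def w'_def
    by (simp_all add: borel_measurable_restrict_space_iff)
  then have "sobolev_norm r (\<lambda>x. v' x * w' x)
      \<le> ennreal ((3 * real CARD('n)) powr (real CARD('n) / 2) / sqrt (\<delta> - r))
        * sobolev_norm r v' * hoelder_norm \<delta> w'"
    using assms(2,5,6) by (rule product_estimate_borel)
  moreover have "sobolev_norm r (\<lambda>x. v x * w x) = sobolev_norm r (\<lambda>x. v' x * w' x)"
    "sobolev_norm r v' = sobolev_norm r v" "hoelder_norm \<delta> w' = hoelder_norm \<delta> w"
    by (auto intro!: sobolev_norm_cong hoelder_norm_cong simp: v'_def w'_def)
  ultimately show ?thesis by simp
qed

end
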